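(* Let $\mathcal{H}$ be a real Hilbert space with norm $\|\cdot\|$. Let $c>0$, $\alpha\in[0,1)$ and $\gamma(t)=\frac{c}{(1+t)^\alpha}$. Let $\omega:[0,+\infty)\to\mathcal{H}$ be a measurable function satisfying $\int_0^{+\infty}\frac{1}{\gamma(t)}\|\omega(t)\|\,dt<+\infty$. If $y\in W^{2,1}_{loc}(0,+\infty;\mathcal{H})$ is a solution of the differential equation $$\ddot y(t)+\gamma(t)\dot y(t)=\omega(t),$$ then $y(t)$ converges strongly in $\mathcal{H}$ as $t\to+\infty$.
   Context: $W^{2,1}_{loc}(0,+\infty;\mathcal{H})$ denotes functions whose first and second (weak) derivatives are locally integrable with values in $\mathcal{H}$; $\dot y,\ddot y$ denote the first and second time derivatives. *)

theory Defs
  imports "HOL-Analysis.Analysis"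
begin

end

theory Submission
  imports Defs
begin

(* With the integrating factor Gamma = exp (integral of gamma) the equation reads
   (Gamma y')' = Gamma omega, so testing against y'(t) gives
   Gamma(t) |y'(t)| <= Gamma(a) |y'(a)| + int_a^t Gamma |omega|.
   If (1/gamma)' <= theta < 1 (for gamma = c/(1+t)^alpha this holds for large t because alpha < 1),
   then Gamma(r) int_r^T 1/Gamma <= 1/((1 - theta) gamma(r)).  Dividing by Gamma, integrating and
   exchanging the order of integration bounds int_a^T |y'| by
   (|y'(a)|/gamma(a) + int |omega|/gamma)/(1 - theta) uniformly in T, so y(t) is Cauchy. *)

lemma has_integral_norm_le_integral_norm:
  fixes f :: "'n::euclidean_space \<Rightarrow> 'a::real_inner"
  assumes f: "(f has_integral i) S" and norm_f: "(\<lambda>x. norm (f x)) integrable_on S"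
  shows "norm i \<le> integral S (\<lambda>x. norm (f x))"
proof -
  let ?B = "integral S (\<lambda>x. norm (f x))"
  have "norm i * norm i \<le> norm i * ?B"
  proof -
    have "((\<lambda>x. inner i (f x)) has_integral inner i i) S"
      using has_integral_linear[OF f bounded_linear_inner_right] by (simp add: o_def)
    moreover have "((\<lambda>x. norm i * norm (f x)) has_integral norm i * ?B) S"
      using norm_f by (intro has_integral_mult_right integrable_integral)
    ultimately have "inner i i \<le> norm i * ?B"
      by (rule has_integral_le) (rule norm_cauchy_schwarz)
    then show ?thesis by (simp add: dot_square_norm power2_eq_square)
  qed
  moreover have "0 \<le> ?B" using norm_f by (rule integral_nonneg) simp
  ultimately show ?thesis by (cases "i = 0") (auto simp: mult_le_cancel_left)
qed

lemma continuous_on_if_has_integral_increments: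
  fixes F f :: "real \<Rightarrow> 'a::real_inner"
  assumes F: "\<And>u v. s \<le> u \<Longrightarrow> u \<le> v \<Longrightarrow> v \<le> t \<Longrightarrow> (f has_integral F v - F u) {u..v}"
    and norm_f: "(\<lambda>x. norm (f x)) integrable_on {s..t}"
  shows "continuous_on {s..t} F"
proof -
  define Q where "Q v = integral {s..v} (\<lambda>x. norm (f x))" for v
  have Q: "continuous_on {s..t} Q"
    unfolding Q_def by (rule indefinite_integral_continuous_1[OF norm_f])
  have le: "dist (F u) (F v) \<le> dist (Q u) (Q v)" if "u \<in> {s..t}" "v \<in> {s..t}" "u \<le> v" for u v
  proof -
    have "dist (F u) (F v) \<le> integral {u..v} (\<lambda>x. norm (f x))"
      unfolding dist_norm norm_minus_commute[of "F u"]
    proof (rule has_integral_norm_le_integral_norm)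
      show "(f has_integral F v - F u) {u..v}" using that by (intro F) auto
      show "(\<lambda>x. norm (f x)) integrable_on {u..v}"
        by (rule integrable_on_subinterval[OF norm_f]) (use that in auto)
    qed
    also have "\<dots> = Q v - Q u"
      unfolding Q_def using that Henstock_Kurzweil_Integration.integral_combine[of s u v "\<lambda>x. norm (f x)"]
        integrable_on_subinterval[OF norm_f, of s v] by auto
    finally show ?thesis by (simp add: dist_real_def)
  qed
  show ?thesis
    unfolding continuous_on_iff
  proof (intro ballI allI impI)
    fix x and e :: real assume "x \<in> {s..t}" "0 < e"
    then obtain d where "0 < d" "\<forall>x'\<in>{s..t}. dist x' x < d \<longrightarrow> dist (Q x') (Q x) < e"
      using Q unfolding continuous_on_iff by blast
    moreover have "dist (F x') (F x) \<le> dist (Q x') (Q x)" if "x' \<in> {s..t}" for x'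
      using le[of x' x] le[of x x'] that \<open>x \<in> {s..t}\<close> by (cases "x' \<le> x") (auto simp: dist_commute)
    ultimately show "\<exists>d>0. \<forall>x'\<in>{s..t}. dist x' x < d \<longrightarrow> dist (F x') (F x) < e"
      by (meson le_less_trans)
  qed
qed

lemma absolutely_integrable_continuous_mult:
  fixes g f :: "real \<Rightarrow> real"
  assumes g: "continuous_on {a..b} g" and f: "f absolutely_integrable_on {a..b}"
  shows "(\<lambda>x. g x * f x) absolutely_integrable_on {a..b}"
proof (rule absolutely_integrable_bounded_measurable_product_real[OF _ _ _ f])
  show "g \<in> borel_measurable (lebesgue_on {a..b})"
    by (rule continuous_imp_measurable_on_sets_lebesgue[OF g]) auto
  show "bounded (g ` {a..b})" by (rule compact_imp_bounded, rule compact_continuous_image[OF g]) auto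
qed auto

lemma (in pair_sigma_finite) integrable_mult_fst_snd:
  fixes u v :: "_ \<Rightarrow> real"
  assumes u: "integrable M1 u" and v: "integrable M2 v"
  shows "integrable (M1 \<Otimes>\<^sub>M M2) (\<lambda>z. u (fst z) * v (snd z))"
proof (rule Fubini_integrable)
  show "(\<lambda>z. u (fst z) * v (snd z)) \<in> borel_measurable (M1 \<Otimes>\<^sub>M M2)"
    using u v by measurable
  show "integrable M1 (\<lambda>x. \<integral>y. norm (u (fst (x, y)) * v (snd (x, y))) \<partial>M2)"
    using u v by (simp add: abs_mult integrable_abs)
  show "AE x in M1. integrable M2 (\<lambda>y. u (fst (x, y)) * v (snd (x, y)))"
    using v by simp
qed

lemma integral_indicator_lborel_eq_integral:
  fixes f :: "'a::euclidean_space \<Rightarrow> real"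
  assumes "set_integrable lborel S f"
  shows "(\<integral>x. indicator S x * f x \<partial>lborel) = integral S f"
  using set_borel_integral_eq_integral(2)[OF assms] by (simp add: set_lebesgue_integral_def)

lemma integral_mult_indefinite_integral_swap_borel:
  fixes f k :: "real \<Rightarrow> real"
  assumes f_borel: "f \<in> borel_measurable borel" and f: "set_integrable lborel {a..b} f"
    and k: "continuous_on {a..b} k"
  shows "integral {a..b} (\<lambda>t. k t * integral {a..t} f) = integral {a..b} (\<lambda>r. f r * integral {r..b} k)"
proof -
  define k0 where "k0 t = indicator {a..b} t * k t" for t
  define f0 where "f0 r = indicator {a..b} r * f r" for r
  define F where "F t r = k0 t * (of_bool (a \<le> r \<and> r \<le> t) * f r)" for t r
  have k0: "integrable lborel k0"
    using borel_integrable_atLeastAtMost'[OF k] unfolding k0_def set_integrable_def by simp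
  have f0: "integrable lborel f0"
    using f unfolding f0_def set_integrable_def by simp
  have F_int: "integrable (lborel \<Otimes>\<^sub>M lborel) (\<lambda>(t, r). F t r)"
  proof (rule Bochner_Integration.integrable_bound[OF lborel_pair.integrable_mult_fst_snd[OF k0 f0]])
    show "(\<lambda>(t, r). F t r) \<in> borel_measurable (lborel \<Otimes>\<^sub>M lborel)"
      using k0 f_borel unfolding F_def by measurable
    show "AE z in lborel \<Otimes>\<^sub>M lborel. norm ((\<lambda>(t, r). F t r) z) \<le> norm (k0 (fst z) * f0 (snd z))"
      by (intro AE_I2) (auto simp: F_def k0_def f0_def indicator_def abs_mult)
  qed
  have inner_t: "(\<integral>r. F t r \<partial>lborel) = indicator {a..b} t * (k t * integral {a..t} f)" for t
  proof (cases "t \<in> {a..b}")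
    case True
    have "set_integrable lborel {a..t} f" by (rule set_integrable_subset[OF f]) (use True in auto)
    moreover have "F t r = k t * (indicator {a..t} r * f r)" for r
      using True by (simp add: F_def k0_def indicator_def)
    ultimately show ?thesis using True by (simp add: integral_indicator_lborel_eq_integral)
  qed (simp add: F_def k0_def)
  have inner_r: "(\<integral>t. F t r \<partial>lborel) = indicator {a..b} r * (f r * integral {r..b} k)" for r
  proof (cases "r \<in> {a..b}")
    case True
    have "set_integrable lborel {r..b} k"
      by (rule borel_integrable_atLeastAtMost', rule continuous_on_subset[OF k]) (use True in auto)
    moreover have "F t r = f r * (indicator {r..b} t * k t)" for t
      using True by (auto simp: F_def k0_def indicator_def)
    ultimately show ?thesis using True by (simp add: integral_indicator_lborel_eq_integral)
  next
    case False
    then have "F t r = 0" for t by (auto simp: F_def k0_def indicator_def)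
    then show ?thesis using False by simp
  qed
  have lhs: "set_integrable lborel {a..b} (\<lambda>t. k t * integral {a..t} f)"
    using lborel_pair.integrable_fst[OF F_int] unfolding set_integrable_def inner_t by simp
  have rhs: "set_integrable lborel {a..b} (\<lambda>r. f r * integral {r..b} k)"
    using lborel_pair.integrable_snd[OF F_int] unfolding set_integrable_def inner_r by simp
  have "(\<integral>r. (\<integral>t. F t r \<partial>lborel) \<partial>lborel) = (\<integral>t. (\<integral>r. F t r \<partial>lborel) \<partial>lborel)"
    by (rule lborel_pair.Fubini_integral[OF F_int])
  then show ?thesis
    by (simp only: inner_t inner_r integral_indicator_lborel_eq_integral[OF lhs]
        integral_indicator_lborel_eq_integral[OF rhs] eq_commute)
qed

lemma integral_mult_indefinite_integral_swap:
  fixes f k :: "real \<Rightarrow> real"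
  assumes f: "f absolutely_integrable_on {a..b}" and k: "continuous_on {a..b} k"
  shows "integral {a..b} (\<lambda>t. k t * integral {a..t} f) = integral {a..b} (\<lambda>r. f r * integral {r..b} k)"
proof -
  define f0 where "f0 x = indicator {a..b} x * f x" for x
  have f0: "integrable lebesgue f0" using f unfolding f0_def set_integrable_def by simp
  then have "f0 \<in> borel_measurable lebesgue" by (rule borel_measurable_integrable)
  then obtain g where g_borel: "g \<in> borel_measurable borel" and f0_g_lborel: "AE x in lborel. f0 x = g x"
    using completion_ex_borel_measurable_real[of f0 lborel] by (auto simp: measurable_lborel1)
  from f0_g_lborel have f0_g: "AE x in lebesgue. f0 x = g x" by (rule AE_completion)
  have fg: "AE x in lborel. x \<in> {a..b} \<longrightarrow> f x = g x"
    using f0_g_lborel by eventually_elim (auto simp: f0_def indicator_def)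
  have "integrable lebesgue g"
    by (rule integrable_cong_AE_imp[OF f0 _ f0_g]) (use g_borel in \<open>simp add: measurable_completion\<close>)
  then have "integrable lborel g"
    using g_borel by (simp add: integrable_completion)
  then have g: "set_integrable lborel {a..b} g"
    unfolding set_integrable_def by (rule integrable_mult_indicator[rotated]) simp
  have integral_AE_eq: "integral S u = integral S v" if "AE x in lborel. x \<in> S \<longrightarrow> u x = v x"
    for S and u v :: "real \<Rightarrow> real"
    unfolding integral_def integrable_on_def using has_integral_AE[OF that] by simp
  have "integral {a..t} f = integral {a..t} g" if "t \<in> {a..b}" for t
    by (rule integral_AE_eq) (use fg that in \<open>eventually_elim, auto\<close>)
  then have "integral {a..b} (\<lambda>t. k t * integral {a..t} f) = integral {a..b} (\<lambda>t. k t * integral {a..t} g)"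
    by (intro integral_cong) simp
  also have "\<dots> = integral {a..b} (\<lambda>r. g r * integral {r..b} k)"
    by (rule integral_mult_indefinite_integral_swap_borel[OF g_borel g k])
  also have "\<dots> = integral {a..b} (\<lambda>r. f r * integral {r..b} k)"
    by (rule integral_AE_eq) (use fg in \<open>eventually_elim, auto\<close>)
  finally show ?thesis .
qed

lemma integral_by_parts_indefinite_integral:
  fixes w G g :: "real \<Rightarrow> real"
  assumes G: "\<And>x. x \<in> {a..t} \<Longrightarrow> (G has_real_derivative g x) (at x within {a..t})"
    and g: "continuous_on {a..t} g"
    and w: "w absolutely_integrable_on {a..t}"
  shows "integral {a..t} (\<lambda>s. g s * integral {a..s} w) = G t * integral {a..t} w - integral {a..t} (\<lambda>r. G r * w r)"
proof -
  have G_diff: "integral {r..t} g = G t - G r" if "r \<in> {a..t}" for r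
  proof (intro integral_unique fundamental_theorem_of_calculus)
    show "r \<le> t" using that by simp
    fix x assume "x \<in> {r..t}"
    with that have "(G has_real_derivative g x) (at x within {r..t})"
      by (intro DERIV_subset[OF G]) auto
    then show "(G has_vector_derivative g x) (at x within {r..t})"
      by (simp add: has_real_derivative_iff_has_vector_derivative)
  qed
  have w_int: "w integrable_on {a..t}" using w set_lebesgue_integral_eq_integral(1) by blast
  have "(\<lambda>r. G r * w r) integrable_on {a..t}"
    using absolutely_integrable_continuous_mult[OF DERIV_continuous_on[OF G] w]
      set_lebesgue_integral_eq_integral(1) by blast
  note Gw = integral_diff[OF integrable_on_cmult_left[OF w_int] this]
  have "integral {a..t} (\<lambda>s. g s * integral {a..s} w) = integral {a..t} (\<lambda>r. w r * integral {r..t} g)"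
    by (rule integral_mult_indefinite_integral_swap[OF w g])
  also have "\<dots> = integral {a..t} (\<lambda>r. G t * w r - G r * w r)"
    by (intro integral_cong) (simp add: G_diff algebra_simps)
  also have "\<dots> = G t * integral {a..t} w - integral {a..t} (\<lambda>r. G r * w r)"
    using Gw by simp
  finally show ?thesis .
qed

lemma has_integral_variation_of_constants:
  fixes u w \<gamma> \<Gamma> :: "real \<Rightarrow> real"
  assumes "a \<le> t"
    and \<gamma>: "continuous_on {a..t} \<gamma>"
    and \<Gamma>: "\<And>x. x \<in> {a..t} \<Longrightarrow> (\<Gamma> has_real_derivative \<gamma> x * \<Gamma> x) (at x within {a..t})"
    and u: "continuous_on {a..t} u"
    and u_eq: "\<And>s. s \<in> {a..t} \<Longrightarrow> ((\<lambda>r. w r - \<gamma> r * u r) has_integral u s - u a) {a..s}"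
    and w: "w absolutely_integrable_on {a..t}"
  shows "((\<lambda>r. \<Gamma> r * w r) has_integral \<Gamma> t * u t - \<Gamma> a * u a) {a..t}"
proof -
  \<comment> \<open>\<open>u\<close> need not be differentiable, but \<open>V = u - W\<close> is, with \<open>V' = - \<gamma> u\<close>.\<close>
  define W where "W s = integral {a..s} w" for s
  define V where "V s = u a - integral {a..s} (\<lambda>r. \<gamma> r * u r)" for s
  have \<gamma>u: "continuous_on {a..t} (\<lambda>r. \<gamma> r * u r)" using \<gamma> u by (intro continuous_intros)
  have w_int: "w integrable_on {a..t}" using w set_lebesgue_integral_eq_integral(1) by blast
  have u_VW: "u s = V s + W s" if "s \<in> {a..t}" for s
  proof -
    have "((\<lambda>r. w r - \<gamma> r * u r) has_integral W s - integral {a..s} (\<lambda>r. \<gamma> r * u r)) {a..s}"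
      unfolding W_def using that
      by (intro has_integral_diff integrable_integral integrable_on_subinterval[OF w_int]
          integrable_continuous_real continuous_on_subset[OF \<gamma>u]) auto
    with u_eq[OF that] show ?thesis unfolding V_def by (auto dest: has_integral_unique)
  qed
  have V': "(V has_real_derivative - (\<gamma> s * u s)) (at s within {a..t})" if "s \<in> {a..t}" for s
    using has_vector_derivative_diff[OF has_vector_derivative_const integral_has_vector_derivative[OF \<gamma>u that]]
    unfolding V_def has_real_derivative_iff_has_vector_derivative by simp
  have "((\<lambda>s. \<Gamma> s * V s) has_real_derivative - (\<gamma> s * \<Gamma> s * W s)) (at s within {a..t})"
    if "s \<in> {a..t}" for s
    using DERIV_mult[OF \<Gamma>[OF that] V'[OF that]] u_VW[OF that] by (simp add: algebra_simps)
  then have "((\<lambda>s. - (\<gamma> s * \<Gamma> s * W s)) has_integral \<Gamma> t * V t - \<Gamma> a * V a) {a..t}"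
    using \<open>a \<le> t\<close> by (intro fundamental_theorem_of_calculus)
      (auto simp: has_real_derivative_iff_has_vector_derivative[symmetric])
  from integral_unique[OF has_integral_neg[OF this]]
  have "integral {a..t} (\<lambda>s. \<gamma> s * \<Gamma> s * W s) = \<Gamma> a * u a - \<Gamma> t * V t"
    by (simp add: V_def)
  moreover have "integral {a..t} (\<lambda>s. \<gamma> s * \<Gamma> s * W s) = \<Gamma> t * W t - integral {a..t} (\<lambda>r. \<Gamma> r * w r)"
    unfolding W_def using \<Gamma> \<gamma> DERIV_continuous_on[OF \<Gamma>]
    by (intro integral_by_parts_indefinite_integral[OF _ _ w]) (auto intro: continuous_intros)
  ultimately have "integral {a..t} (\<lambda>r. \<Gamma> r * w r) = \<Gamma> t * u t - \<Gamma> a * u a"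
    using u_VW[of t] \<open>a \<le> t\<close> by (simp add: algebra_simps)
  moreover have "(\<lambda>r. \<Gamma> r * w r) integrable_on {a..t}"
    using absolutely_integrable_continuous_mult[OF DERIV_continuous_on[OF \<Gamma>] w]
      set_lebesgue_integral_eq_integral(1) by blast
  ultimately show ?thesis by (metis has_integral_integral)
qed

lemma variation_of_constants_le:
  fixes u w \<gamma> \<Gamma> m :: "real \<Rightarrow> real"
  assumes "a \<le> t"
    and \<gamma>: "continuous_on {a..t} \<gamma>"
    and \<Gamma>: "\<And>x. x \<in> {a..t} \<Longrightarrow> (\<Gamma> has_real_derivative \<gamma> x * \<Gamma> x) (at x within {a..t})"
    and \<Gamma>_nonneg: "\<And>x. x \<in> {a..t} \<Longrightarrow> 0 \<le> \<Gamma> x"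
    and u: "continuous_on {a..t} u"
    and u_eq: "\<And>s. s \<in> {a..t} \<Longrightarrow> ((\<lambda>r. w r - \<gamma> r * u r) has_integral u s - u a) {a..s}"
    and m: "m integrable_on {a..t}" and w_le: "\<And>r. r \<in> {a..t} \<Longrightarrow> \<bar>w r\<bar> \<le> m r"
  shows "\<Gamma> t * u t - \<Gamma> a * u a \<le> integral {a..t} (\<lambda>r. \<Gamma> r * m r)"
proof -
  have "(\<lambda>r. w r - \<gamma> r * u r) integrable_on {a..t}"
    using \<open>a \<le> t\<close> by (intro has_integral_integrable[OF u_eq]) simp
  from integrable_add[OF this integrable_continuous_real[of a t "\<lambda>r. \<gamma> r * u r"]]
  have "w integrable_on {a..t}" using \<gamma> u by (simp add: continuous_on_mult)
  then have w: "w absolutely_integrable_on {a..t}"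
    using m w_le by (intro absolutely_integrable_integrable_bound[where g = m]) auto
  have m_abs: "m absolutely_integrable_on {a..t}"
    using m w_le by (intro nonnegative_absolutely_integrable_1) (auto intro: order_trans[OF abs_ge_zero])
  have "(\<lambda>r. \<Gamma> r * m r) integrable_on {a..t}"
    using absolutely_integrable_continuous_mult[OF DERIV_continuous_on[OF \<Gamma>] m_abs]
      set_lebesgue_integral_eq_integral(1) by blast
  with has_integral_variation_of_constants[OF \<open>a \<le> t\<close> \<gamma> \<Gamma> u u_eq w]
  show ?thesis
    by (rule has_integral_le[OF _ integrable_integral])
      (use \<Gamma>_nonneg w_le in \<open>auto intro: mult_left_mono order_trans[OF abs_ge_self]\<close>)
qed

lemma norm_variation_of_constants_le:
  fixes v w :: "real \<Rightarrow> 'a::real_inner" and \<gamma> \<Gamma> m :: "real \<Rightarrow> real"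
  assumes "a \<le> t"
    and \<gamma>: "continuous_on {a..t} \<gamma>"
    and \<Gamma>: "\<And>x. x \<in> {a..t} \<Longrightarrow> (\<Gamma> has_real_derivative \<gamma> x * \<Gamma> x) (at x within {a..t})"
    and \<Gamma>_nonneg: "\<And>x. x \<in> {a..t} \<Longrightarrow> 0 \<le> \<Gamma> x"
    and v: "continuous_on {a..t} v"
    and v_eq: "\<And>s. s \<in> {a..t} \<Longrightarrow> ((\<lambda>r. w r - \<gamma> r *\<^sub>R v r) has_integral v s - v a) {a..s}"
    and m: "m integrable_on {a..t}" and w_le: "\<And>r. r \<in> {a..t} \<Longrightarrow> norm (w r) \<le> m r"
  shows "\<Gamma> t * norm (v t) \<le> \<Gamma> a * norm (v a) + integral {a..t} (\<lambda>r. \<Gamma> r * m r)"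
proof -
  \<comment> \<open>\<open>'a\<close> need not be separable, so there is no Bochner integral in \<open>'a\<close>; test against \<open>e = v t\<close>.\<close>
  define e where "e = v t"
  define I where "I = integral {a..t} (\<lambda>r. \<Gamma> r * m r)"
  have "\<Gamma> t * inner e (v t) - \<Gamma> a * inner e (v a) \<le> integral {a..t} (\<lambda>r. \<Gamma> r * (norm e * m r))"
  proof (rule variation_of_constants_le[OF \<open>a \<le> t\<close> \<gamma> \<Gamma> \<Gamma>_nonneg])
    show "continuous_on {a..t} (\<lambda>r. inner e (v r))" using v by (intro continuous_intros)
    show "((\<lambda>r. inner e (w r) - \<gamma> r * inner e (v r)) has_integral inner e (v s) - inner e (v a)) {a..s}"
      if "s \<in> {a..t}" for s
      using has_integral_linear[OF v_eq[OF that] bounded_linear_inner_right[of e]]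
      by (simp add: o_def inner_diff_right)
    show "(\<lambda>r. norm e * m r) integrable_on {a..t}" using integrable_on_cmult_left[OF m, of "norm e"] by simp
    show "\<bar>inner e (w r)\<bar> \<le> norm e * m r" if "r \<in> {a..t}" for r
      using Cauchy_Schwarz_ineq2[of e "w r"] mult_left_mono[OF w_le[OF that] norm_ge_zero[of e]] by linarith
  qed
  also have "\<dots> = norm e * I" unfolding I_def by (simp add: algebra_simps)
  finally have "norm e * (\<Gamma> t * norm e) \<le> norm e * (\<Gamma> a * norm (v a) + I)"
    using mult_left_mono[OF norm_cauchy_schwarz[of e "v a"] \<Gamma>_nonneg[of a]] \<open>a \<le> t\<close>
    by (simp add: e_def dot_square_norm power2_eq_square algebra_simps)
  moreover have "0 \<le> \<Gamma> a * norm (v a) + I"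
  proof -
    have m_nonneg: "0 \<le> m r" if "r \<in> {a..t}" for r using w_le[OF that] norm_ge_zero order_trans by blast
    from absolutely_integrable_continuous_mult[OF DERIV_continuous_on[OF \<Gamma>] nonnegative_absolutely_integrable_1[OF m m_nonneg]]
    have "0 \<le> I"
      unfolding I_def using \<Gamma>_nonneg m_nonneg set_lebesgue_integral_eq_integral(1) by (intro integral_nonneg) auto
    then show ?thesis using \<Gamma>_nonneg[of a] \<open>a \<le> t\<close> by simp
  qed
  ultimately show ?thesis
    unfolding e_def I_def by (cases "v t = 0") (auto simp: mult_le_cancel_left)
qed

lemma integrating_factor_tail_le:
  fixes \<Gamma> \<gamma> \<delta> :: "real \<Rightarrow> real"
  assumes "r \<le> T" "\<theta> < 1"
    and \<Gamma>: "\<And>t. t \<in> {r..T} \<Longrightarrow> (\<Gamma> has_real_derivative \<gamma> t * \<Gamma> t) (at t within {r..T})"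
    and \<Gamma>_pos: "\<And>t. t \<in> {r..T} \<Longrightarrow> 0 < \<Gamma> t"
    and \<gamma>_pos: "\<And>t. t \<in> {r..T} \<Longrightarrow> 0 < \<gamma> t"
    and \<delta>: "\<And>t. t \<in> {r..T} \<Longrightarrow> ((\<lambda>t. 1 / \<gamma> t) has_real_derivative \<delta> t) (at t within {r..T})"
    and \<delta>_le: "\<And>t. t \<in> {r..T} \<Longrightarrow> \<delta> t \<le> \<theta>"
  shows "\<Gamma> r * integral {r..T} (\<lambda>t. 1 / \<Gamma> t) \<le> 1 / ((1 - \<theta>) * \<gamma> r)"
proof -
  define H where "H t = - 1 / (1 - \<theta>) * (1 / \<gamma> t * (1 / \<Gamma> t))" for t
  have H': "(H has_real_derivative (1 - \<delta> t) / ((1 - \<theta>) * \<Gamma> t)) (at t within {r..T})"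
    if t: "t \<in> {r..T}" for t
  proof -
    have "((\<lambda>t. 1 / \<Gamma> t) has_real_derivative - \<gamma> t / \<Gamma> t) (at t within {r..T})"
      using DERIV_divide[OF DERIV_const[of 1] \<Gamma>[OF t]] \<Gamma>_pos[OF t] by (simp add: power2_eq_square)
    from DERIV_cmult[OF DERIV_mult[OF \<delta>[OF t] this], of "- 1 / (1 - \<theta>)"]
    show ?thesis
      unfolding H_def
      by (rule DERIV_cong) (use \<gamma>_pos[OF t] \<Gamma>_pos[OF t] \<open>\<theta> < 1\<close> in \<open>simp add: field_simps\<close>)
  qed
  have "((\<lambda>t. 1 / \<Gamma> t) has_integral integral {r..T} (\<lambda>t. 1 / \<Gamma> t)) {r..T}"
    using \<Gamma> \<Gamma>_pos by (intro integrable_integral integrable_continuous_real continuous_on_divide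
        continuous_on_const DERIV_continuous_on) force+
  moreover have "((\<lambda>t. (1 - \<delta> t) / ((1 - \<theta>) * \<Gamma> t)) has_integral H T - H r) {r..T}"
    using \<open>r \<le> T\<close> H' by (intro fundamental_theorem_of_calculus)
      (auto simp: has_real_derivative_iff_has_vector_derivative[symmetric])
  moreover have "1 / \<Gamma> t \<le> (1 - \<delta> t) / ((1 - \<theta>) * \<Gamma> t)" if "t \<in> {r..T}" for t
    using \<delta>_le[OF that] \<Gamma>_pos[OF that] \<open>\<theta> < 1\<close> by (simp add: field_simps)
  ultimately have "integral {r..T} (\<lambda>t. 1 / \<Gamma> t) \<le> H T - H r"
    by (rule has_integral_le)
  also have "\<dots> \<le> - H r"
  proof -
    have "0 < 1 / \<gamma> T * (1 / \<Gamma> T)" using \<gamma>_pos[of T] \<Gamma>_pos[of T] \<open>r \<le> T\<close> by simp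
    then have "H T \<le> 0"
      unfolding H_def using \<open>\<theta> < 1\<close> by (intro mult_nonpos_nonneg divide_nonpos_pos) auto
    then show ?thesis by simp
  qed
  finally show ?thesis
    using \<Gamma>_pos \<gamma>_pos \<open>r \<le> T\<close> \<open>\<theta> < 1\<close> unfolding H_def by (simp add: field_simps)
qed

lemma integral_indefinite_integral_div_le:
  fixes \<Gamma> m q :: "real \<Rightarrow> real"
  assumes \<Gamma>: "continuous_on {a..T} \<Gamma>" "\<And>t. t \<in> {a..T} \<Longrightarrow> 0 < \<Gamma> t"
    and m: "m integrable_on {a..T}" "\<And>t. t \<in> {a..T} \<Longrightarrow> 0 \<le> m t"
    and q: "continuous_on {a..T} q"
    and tail: "\<And>r. r \<in> {a..T} \<Longrightarrow> \<Gamma> r * integral {r..T} (\<lambda>t. 1 / \<Gamma> t) \<le> q r"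
  shows "integral {a..T} (\<lambda>t. integral {a..t} (\<lambda>r. \<Gamma> r * m r) / \<Gamma> t) \<le> integral {a..T} (\<lambda>r. q r * m r)"
proof -
  have "\<forall>t\<in>{a..T}. \<Gamma> t \<noteq> 0" using \<Gamma>(2) by force
  then have inv_\<Gamma>: "continuous_on {a..T} (\<lambda>t. 1 / \<Gamma> t)"
    using \<Gamma>(1) by (intro continuous_intros)
  have m_abs: "m absolutely_integrable_on {a..T}" using m by (rule nonnegative_absolutely_integrable_1)
  have \<Gamma>m: "(\<lambda>r. \<Gamma> r * m r) absolutely_integrable_on {a..T}"
    by (rule absolutely_integrable_continuous_mult[OF \<Gamma>(1) m_abs])
  have "integral {a..T} (\<lambda>t. integral {a..t} (\<lambda>r. \<Gamma> r * m r) / \<Gamma> t)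
      = integral {a..T} (\<lambda>r. \<Gamma> r * m r * integral {r..T} (\<lambda>t. 1 / \<Gamma> t))"
    using integral_mult_indefinite_integral_swap[OF \<Gamma>m inv_\<Gamma>] by simp
  also have "\<dots> \<le> integral {a..T} (\<lambda>r. q r * m r)"
  proof (rule integral_le)
    have "continuous_on {a..T} (\<lambda>r. integral {r..T} (\<lambda>t. 1 / \<Gamma> t))"
      by (rule indefinite_integral_continuous_1'[OF integrable_continuous_real[OF inv_\<Gamma>]])
    from absolutely_integrable_continuous_mult[OF this \<Gamma>m]
    show "(\<lambda>r. \<Gamma> r * m r * integral {r..T} (\<lambda>t. 1 / \<Gamma> t)) integrable_on {a..T}"
      using set_lebesgue_integral_eq_integral(1) by (simp add: mult.commute)
    show "(\<lambda>r. q r * m r) integrable_on {a..T}"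
      using absolutely_integrable_continuous_mult[OF q m_abs] set_lebesgue_integral_eq_integral(1) by blast
    show "\<Gamma> r * m r * integral {r..T} (\<lambda>t. 1 / \<Gamma> t) \<le> q r * m r" if "r \<in> {a..T}" for r
      using mult_right_mono[OF tail[OF that] m(2)[OF that]] by (simp add: algebra_simps)
  qed
  finally show ?thesis .
qed

lemma integral_le_by_integrating_factor:
  fixes p m q \<Gamma> :: "real \<Rightarrow> real"
  assumes "a \<le> T" "0 \<le> K"
    and \<Gamma>: "continuous_on {a..T} \<Gamma>" "\<And>t. t \<in> {a..T} \<Longrightarrow> 0 < \<Gamma> t"
    and m: "m integrable_on {a..T}" "\<And>t. t \<in> {a..T} \<Longrightarrow> 0 \<le> m t"
    and q: "continuous_on {a..T} q"
    and tail: "\<And>r. r \<in> {a..T} \<Longrightarrow> \<Gamma> r * integral {r..T} (\<lambda>t. 1 / \<Gamma> t) \<le> q r"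
    and p: "p integrable_on {a..T}"
    and p_le: "\<And>t. t \<in> {a..T} \<Longrightarrow> \<Gamma> t * p t \<le> K + integral {a..t} (\<lambda>r. \<Gamma> r * m r)"
  shows "integral {a..T} p \<le> K * q a / \<Gamma> a + integral {a..T} (\<lambda>r. q r * m r)"
proof -
  define P where "P t = integral {a..t} (\<lambda>r. \<Gamma> r * m r)" for t
  have \<Gamma>_ne: "\<forall>t\<in>{a..T}. \<Gamma> t \<noteq> 0" using \<Gamma>(2) by force
  then have inv_\<Gamma>: "continuous_on {a..T} (\<lambda>t. 1 / \<Gamma> t)"
    using \<Gamma>(1) by (intro continuous_intros)
  have P_cont: "continuous_on {a..T} P"
    unfolding P_def using absolutely_integrable_continuous_mult[OF \<Gamma>(1) nonnegative_absolutely_integrable_1[OF m]]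
    by (simp add: set_lebesgue_integral_eq_integral(1) indefinite_integral_continuous_1)
  have "integral {a..T} p \<le> integral {a..T} (\<lambda>t. K / \<Gamma> t + P t / \<Gamma> t)"
  proof (rule integral_le[OF p])
    show "(\<lambda>t. K / \<Gamma> t + P t / \<Gamma> t) integrable_on {a..T}"
      using \<Gamma>(1) \<Gamma>_ne P_cont by (intro integrable_continuous_real continuous_intros)
    show "p t \<le> K / \<Gamma> t + P t / \<Gamma> t" if "t \<in> {a..T}" for t
      using p_le[OF that] \<Gamma>(2)[OF that] unfolding P_def by (simp add: field_simps)
  qed
  also have "\<dots> = K * integral {a..T} (\<lambda>t. 1 / \<Gamma> t) + integral {a..T} (\<lambda>t. P t / \<Gamma> t)"
    using integral_add[OF integrable_on_cmult_left[OF integrable_continuous_real[OF inv_\<Gamma>], where c = K]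
        integrable_continuous_real[OF continuous_on_mult[OF P_cont inv_\<Gamma>]]]
      integral_mult_right[of "{a..T}" K "\<lambda>t. 1 / \<Gamma> t"]
    by simp
  also have "\<dots> \<le> K * (q a / \<Gamma> a) + integral {a..T} (\<lambda>r. q r * m r)"
  proof (rule add_mono)
    have "integral {a..T} (\<lambda>t. 1 / \<Gamma> t) \<le> q a / \<Gamma> a"
      by (rule pos_le_divide_eq[THEN iffD2, OF \<Gamma>(2)])
        (use tail[of a] \<open>a \<le> T\<close> in \<open>simp_all add: mult.commute\<close>)
    then show "K * integral {a..T} (\<lambda>t. 1 / \<Gamma> t) \<le> K * (q a / \<Gamma> a)"
      using \<open>0 \<le> K\<close> by (rule mult_left_mono)
    show "integral {a..T} (\<lambda>t. P t / \<Gamma> t) \<le> integral {a..T} (\<lambda>r. q r * m r)"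
      unfolding P_def by (rule integral_indefinite_integral_div_le[OF \<Gamma> m q tail])
  qed
  finally show ?thesis by simp
qed

lemma tendsto_at_top_if_dist_le_bounded_increasing:
  fixes y :: "real \<Rightarrow> 'a::complete_space" and \<phi> :: "real \<Rightarrow> real"
  assumes dist_le: "\<And>s t. a \<le> s \<Longrightarrow> s \<le> t \<Longrightarrow> dist (y s) (y t) \<le> \<phi> t - \<phi> s"
    and bounded: "\<And>t. a \<le> t \<Longrightarrow> \<phi> t \<le> B"
  shows "\<exists>L. (y \<longlongrightarrow> L) at_top"
proof -
  have bdd: "bdd_above (\<phi> ` {a..})" using bounded by (auto intro!: bdd_aboveI2)
  have "cauchy_filter (filtermap y at_top)"
    unfolding cauchy_filter_metric_filtermap
  proof (intro allI impI)
    fix e :: real assume "0 < e"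
    then obtain T where T: "a \<le> T" "Sup (\<phi> ` {a..}) - e < \<phi> T"
      using less_cSup_iff[OF _ bdd, of "Sup (\<phi> ` {a..}) - e"] by auto
    have close: "dist (y s) (y t) < e" if "T \<le> s" "s \<le> t" for s t
    proof -
      have "\<phi> T \<le> \<phi> s" using dist_le[of T s] zero_le_dist[of "y T" "y s"] T that by linarith
      moreover have "\<phi> t \<le> Sup (\<phi> ` {a..})" using T that by (intro cSup_upper[OF _ bdd]) auto
      ultimately show ?thesis using dist_le[of s t] T that by linarith
    qed
    show "\<exists>P. eventually P at_top \<and> (\<forall>s t. P s \<and> P t \<longrightarrow> dist (y s) (y t) < e)"
    proof (intro exI conjI allI impI)
      show "eventually (\<lambda>s. T \<le> s) at_top" by (rule eventually_ge_at_top)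
      fix s t assume "T \<le> s \<and> T \<le> t"
      then show "dist (y s) (y t) < e"
        using close[of s t] close[of t s] by (cases "s \<le> t") (auto simp: dist_commute)
    qed
  qed
  then obtain L where "filtermap y at_top \<le> nhds L"
    using cauchy_filter_complete_converges[of "filtermap y at_top" UNIV] complete_UNIV
    by (auto simp: filtermap_bot_iff)
  then show ?thesis unfolding filterlim_def by blast
qed

lemma tendsto_at_top_if_integral_norm_derivative_bounded:
  fixes y y' :: "real \<Rightarrow> 'a::{real_inner, complete_space}"
  assumes y': "\<And>s t. a \<le> s \<Longrightarrow> s \<le> t \<Longrightarrow> (y' has_integral y t - y s) {s..t}"
    and norm_y': "\<And>T. a \<le> T \<Longrightarrow> (\<lambda>t. norm (y' t)) integrable_on {a..T}"
    and bounded: "\<And>T. a \<le> T \<Longrightarrow> integral {a..T} (\<lambda>t. norm (y' t)) \<le> B"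
  shows "\<exists>L. (y \<longlongrightarrow> L) at_top"
proof (rule tendsto_at_top_if_dist_le_bounded_increasing[OF _ bounded])
  fix s t assume st: "a \<le> s" "s \<le> t"
  have "dist (y s) (y t) \<le> integral {s..t} (\<lambda>x. norm (y' x))"
    unfolding dist_norm norm_minus_commute[of "y s"] using y'[OF st] st
    by (intro has_integral_norm_le_integral_norm integrable_on_subinterval[OF norm_y'[of t]]) auto
  also have "\<dots> = integral {a..t} (\<lambda>x. norm (y' x)) - integral {a..s} (\<lambda>x. norm (y' x))"
    using st Henstock_Kurzweil_Integration.integral_combine[OF _ _ norm_y'[of t], of s] by simp
  finally show "dist (y s) (y t) \<le> integral {a..t} (\<lambda>x. norm (y' x)) - integral {a..s} (\<lambda>x. norm (y' x))" .
qed

lemma has_real_derivative_exp_integral: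
  fixes \<gamma> :: "real \<Rightarrow> real"
  assumes "continuous_on {a..T} \<gamma>" "t \<in> {a..T}"
  shows "((\<lambda>t. exp (integral {a..t} \<gamma>)) has_real_derivative \<gamma> t * exp (integral {a..t} \<gamma>)) (at t within {a..T})"
proof -
  have "((\<lambda>t. integral {a..t} \<gamma>) has_real_derivative \<gamma> t) (at t within {a..T})"
    using integral_has_vector_derivative[OF assms] by (simp add: has_real_derivative_iff_has_vector_derivative)
  from DERIV_chain2[OF DERIV_exp this] show ?thesis by (simp add: mult.commute)
qed

lemma integral_norm_le_by_variation_of_constants:
  fixes v w :: "real \<Rightarrow> 'a::real_inner" and \<gamma> \<Gamma> q :: "real \<Rightarrow> real"
  assumes "a \<le> T"
    and \<gamma>: "continuous_on {a..T} \<gamma>"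
    and \<Gamma>: "\<And>t. t \<in> {a..T} \<Longrightarrow> (\<Gamma> has_real_derivative \<gamma> t * \<Gamma> t) (at t within {a..T})"
    and \<Gamma>_pos: "\<And>t. t \<in> {a..T} \<Longrightarrow> 0 < \<Gamma> t"
    and v: "continuous_on {a..T} v"
    and v_eq: "\<And>s. s \<in> {a..T} \<Longrightarrow> ((\<lambda>r. w r - \<gamma> r *\<^sub>R v r) has_integral v s - v a) {a..s}"
    and norm_w: "(\<lambda>t. norm (w t)) integrable_on {a..T}"
    and q: "continuous_on {a..T} q"
    and tail: "\<And>r. r \<in> {a..T} \<Longrightarrow> \<Gamma> r * integral {r..T} (\<lambda>t. 1 / \<Gamma> t) \<le> q r"
  shows "integral {a..T} (\<lambda>t. norm (v t)) \<le> norm (v a) * q a + integral {a..T} (\<lambda>r. q r * norm (w r))"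
proof -
  have "\<Gamma> t * norm (v t) \<le> \<Gamma> a * norm (v a) + integral {a..t} (\<lambda>r. \<Gamma> r * norm (w r))"
    if t: "t \<in> {a..T}" for t
  proof (rule norm_variation_of_constants_le)
    show "continuous_on {a..t} \<gamma>" "continuous_on {a..t} v"
      using t by (auto intro: continuous_on_subset[OF \<gamma>] continuous_on_subset[OF v])
    show "(\<Gamma> has_real_derivative \<gamma> x * \<Gamma> x) (at x within {a..t})" if "x \<in> {a..t}" for x
      using that t by (auto intro: DERIV_subset[OF \<Gamma>])
    show "(\<lambda>r. norm (w r)) integrable_on {a..t}"
      using t by (auto intro: integrable_on_subinterval[OF norm_w])
  qed (use t v_eq \<Gamma>_pos in \<open>auto simp: less_imp_le\<close>)
  then have "integral {a..T} (\<lambda>t. norm (v t)) \<le> \<Gamma> a * norm (v a) * q a / \<Gamma> a + integral {a..T} (\<lambda>r. q r * norm (w r))"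
    using \<open>a \<le> T\<close> \<Gamma>_pos[of a] v
    by (intro integral_le_by_integrating_factor[OF _ _ DERIV_continuous_on[OF \<Gamma>] \<Gamma>_pos norm_w _ q tail])
      (auto intro: integrable_continuous_real continuous_intros)
  then show ?thesis using \<Gamma>_pos[of a] \<open>a \<le> T\<close> by simp
qed

lemma integral_norm_le_damped_first_order:
  fixes v w :: "real \<Rightarrow> 'a::real_inner" and \<gamma> \<delta> :: "real \<Rightarrow> real"
  assumes "a \<le> T" "\<theta> < 1"
    and \<gamma>_pos: "\<And>t. t \<in> {a..T} \<Longrightarrow> 0 < \<gamma> t"
    and \<delta>: "\<And>t. t \<in> {a..T} \<Longrightarrow> ((\<lambda>t. 1 / \<gamma> t) has_real_derivative \<delta> t) (at t within {a..T})"
    and \<delta>_le: "\<And>t. t \<in> {a..T} \<Longrightarrow> \<delta> t \<le> \<theta>"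
    and v: "continuous_on {a..T} v"
    and v_eq: "\<And>s. s \<in> {a..T} \<Longrightarrow> ((\<lambda>r. w r - \<gamma> r *\<^sub>R v r) has_integral v s - v a) {a..s}"
    and w: "(\<lambda>t. norm (w t) / \<gamma> t) integrable_on {a..T}"
  shows "integral {a..T} (\<lambda>t. norm (v t))
           \<le> (norm (v a) / \<gamma> a + integral {a..T} (\<lambda>t. norm (w t) / \<gamma> t)) / (1 - \<theta>)"
proof -
  have "\<forall>t\<in>{a..T}. 1 / \<gamma> t \<noteq> 0" using \<gamma>_pos by force
  from continuous_on_divide[OF continuous_on_const DERIV_continuous_on[OF \<delta>] this]
  have "continuous_on {a..T} (\<lambda>t. 1 / (1 / \<gamma> t))" .
  then have \<gamma>: "continuous_on {a..T} \<gamma>" by simp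
  define \<Gamma> where "\<Gamma> t = exp (integral {a..t} \<gamma>)" for t
  have \<Gamma>: "(\<Gamma> has_real_derivative \<gamma> t * \<Gamma> t) (at t within {a..T})" if "t \<in> {a..T}" for t
    unfolding \<Gamma>_def by (rule has_real_derivative_exp_integral[OF \<gamma> that])
  have \<Gamma>_pos: "0 < \<Gamma> t" for t unfolding \<Gamma>_def by simp
  have "(\<lambda>t. norm (w t) / \<gamma> t) absolutely_integrable_on {a..T}"
    using w \<gamma>_pos by (intro nonnegative_absolutely_integrable_1) (auto simp: less_imp_le)
  from absolutely_integrable_continuous_mult[OF \<gamma> this]
  have "(\<lambda>t. norm (w t)) absolutely_integrable_on {a..T}"
    by (rule set_integrable_cong[THEN iffD1, rotated 3]) (use \<gamma>_pos in \<open>auto simp: less_imp_neq[symmetric]\<close>)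
  then have norm_w: "(\<lambda>t. norm (w t)) integrable_on {a..T}"
    using set_lebesgue_integral_eq_integral(1) by blast
  have tail: "\<Gamma> r * integral {r..T} (\<lambda>t. 1 / \<Gamma> t) \<le> 1 / ((1 - \<theta>) * \<gamma> r)" if "r \<in> {a..T}" for r
  proof (rule integrating_factor_tail_le[where \<delta> = \<delta>])
    show "(\<Gamma> has_real_derivative \<gamma> t * \<Gamma> t) (at t within {r..T})"
      and "((\<lambda>t. 1 / \<gamma> t) has_real_derivative \<delta> t) (at t within {r..T})" if "t \<in> {r..T}" for t
      using that \<open>r \<in> {a..T}\<close> by (auto intro: DERIV_subset[OF \<Gamma>] DERIV_subset[OF \<delta>])
  qed (use that \<open>\<theta> < 1\<close> \<Gamma>_pos \<gamma>_pos \<delta>_le in auto)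
  have "continuous_on {a..T} (\<lambda>r. 1 / ((1 - \<theta>) * \<gamma> r))"
    using continuous_on_mult[OF continuous_on_const DERIV_continuous_on[OF \<delta>], of "1 / (1 - \<theta>)"] by simp
  from integral_norm_le_by_variation_of_constants[OF \<open>a \<le> T\<close> \<gamma> \<Gamma> \<Gamma>_pos v v_eq norm_w this tail]
  have "integral {a..T} (\<lambda>t. norm (v t))
      \<le> norm (v a) * (1 / ((1 - \<theta>) * \<gamma> a)) + integral {a..T} (\<lambda>r. 1 / ((1 - \<theta>) * \<gamma> r) * norm (w r))" .
  also have "\<dots> = (norm (v a) / \<gamma> a + integral {a..T} (\<lambda>t. norm (w t) / \<gamma> t)) / (1 - \<theta>)"
  proof -
    have "integral {a..T} (\<lambda>r. 1 / ((1 - \<theta>) * \<gamma> r) * norm (w r))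
        = integral {a..T} (\<lambda>t. norm (w t) / \<gamma> t) / (1 - \<theta>)"
      unfolding integral_divide[symmetric]
      by (rule integral_cong) (simp add: divide_divide_eq_left mult.commute)
    then show ?thesis by (simp add: add_divide_distrib divide_divide_eq_left mult.commute)
  qed
  finally show ?thesis .
qed

theorem damped_second_order_converges:
  fixes y y' y'' \<omega> :: "real \<Rightarrow> 'a::{real_inner, complete_space}" and \<gamma> \<delta> :: "real \<Rightarrow> real"
  assumes "\<theta> < 1"
    and \<gamma>_pos: "\<And>t. a \<le> t \<Longrightarrow> 0 < \<gamma> t"
    and \<delta>: "\<And>t. a \<le> t \<Longrightarrow> ((\<lambda>t. 1 / \<gamma> t) has_real_derivative \<delta> t) (at t)"
    and \<delta>_le: "\<And>t. a \<le> t \<Longrightarrow> \<delta> t \<le> \<theta>"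
    and \<omega>: "(\<lambda>t. norm (\<omega> t) / \<gamma> t) integrable_on {a..}"
    and y: "\<And>s t. a \<le> s \<Longrightarrow> s \<le> t \<Longrightarrow>
         (y' has_integral (y t - y s)) {s..t}
       \<and> (y'' has_integral (y' t - y' s)) {s..t}
       \<and> (\<lambda>u. norm (y'' u)) integrable_on {s..t}"
    and ode: "AE t in lebesgue. a \<le> t \<longrightarrow> y'' t + \<gamma> t *\<^sub>R y' t = \<omega> t"
  shows "\<exists>L. (y \<longlongrightarrow> L) at_top"
proof (rule tendsto_at_top_if_integral_norm_derivative_bounded)
  have y'_cont: "continuous_on {a..T} y'" if "a \<le> T" for T
    using y that by (intro continuous_on_if_has_integral_increments) auto
  then show "(\<lambda>t. norm (y' t)) integrable_on {a..T}" if "a \<le> T" for T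
    using that by (intro integrable_continuous_real continuous_intros)
  have y'_eq: "((\<lambda>r. \<omega> r - \<gamma> r *\<^sub>R y' r) has_integral y' s - y' a) {a..s}" if "a \<le> s" for s
  proof -
    have "AE r in lborel. r \<in> {a..s} \<longrightarrow> y'' r = \<omega> r - \<gamma> r *\<^sub>R y' r"
      using ode unfolding AE_completion_iff by eventually_elim (auto simp: eq_diff_eq)
    with y[OF order_refl that] show ?thesis by (simp add: has_integral_AE)
  qed
  have \<omega>_abs: "(\<lambda>t. norm (\<omega> t) / \<gamma> t) absolutely_integrable_on {a..}"
    using \<omega> \<gamma>_pos by (intro nonnegative_absolutely_integrable_1) (auto simp: less_imp_le)
  fix T assume "a \<le> T"
  have \<omega>_T: "(\<lambda>t. norm (\<omega> t) / \<gamma> t) integrable_on {a..T}"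
    using \<omega>_abs set_integrable_subset[of lebesgue "{a..}" _ "{a..T}"] set_lebesgue_integral_eq_integral(1)
    by auto
  have "integral {a..T} (\<lambda>t. norm (y' t))
      \<le> (norm (y' a) / \<gamma> a + integral {a..T} (\<lambda>t. norm (\<omega> t) / \<gamma> t)) / (1 - \<theta>)"
    using \<open>a \<le> T\<close> \<open>\<theta> < 1\<close> \<gamma>_pos \<delta>_le y'_cont y'_eq \<omega>_T
    by (intro integral_norm_le_damped_first_order) (auto intro: has_field_derivative_at_within \<delta>)
  also have "\<dots> \<le> (norm (y' a) / \<gamma> a + integral {a..} (\<lambda>t. norm (\<omega> t) / \<gamma> t)) / (1 - \<theta>)"
    using \<open>\<theta> < 1\<close> \<omega>_T \<omega> \<gamma>_pos
    by (intro divide_right_mono add_left_mono integral_subset_le) (auto simp: less_imp_le)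
  finally show "integral {a..T} (\<lambda>t. norm (y' t))
      \<le> (norm (y' a) / \<gamma> a + integral {a..} (\<lambda>t. norm (\<omega> t) / \<gamma> t)) / (1 - \<theta>)" .
qed (use y in blast)

theorem lemma3:
  fixes y y' y'' \<omega> :: "real \<Rightarrow> 'a::{real_inner, complete_space}"
    and c \<alpha> :: real
  assumes c_pos: "c > 0"
    and alpha: "0 \<le> \<alpha>" "\<alpha> < 1"
    and \<omega>_meas: "\<omega> \<in> borel_measurable (lebesgue_on {0..})"
    and \<omega>_int: "(\<lambda>t. norm (\<omega> t) / (c / (1 + t) powr \<alpha>)) integrable_on {0..}"
    and W21loc: "\<And>s t. 0 < s \<Longrightarrow> s \<le> t \<Longrightarrow>
         (y' has_integral (y t - y s)) {s..t}
       \<and> (y'' has_integral (y' t - y' s)) {s..t}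
       \<and> (\<lambda>u. norm (y'' u)) integrable_on {s..t}"
    and ode: "AE t in lebesgue. t > 0 \<longrightarrow> y'' t + (c / (1 + t) powr \<alpha>) *\<^sub>R y' t = \<omega> t"
  shows "\<exists>L. (y \<longlongrightarrow> L) at_top"
proof -
  define \<delta> where "\<delta> t = \<alpha> * (1 + t) powr (\<alpha> - 1) / c" for t :: real
  have "(\<delta> \<longlongrightarrow> \<alpha> * 0 / c) at_top"
    unfolding \<delta>_def using alpha c_pos
    by (intro tendsto_intros tendsto_neg_powr filterlim_tendsto_add_at_top[OF tendsto_const filterlim_ident]) auto
  then have "eventually (\<lambda>t. \<delta> t < 1 / 2) at_top" by (rule order_tendstoD) simp
  then obtain a where "1 \<le> a" and \<delta>_le: "\<And>t. a \<le> t \<Longrightarrow> \<delta> t \<le> 1 / 2"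
    unfolding eventually_at_top_linorder by (metis less_imp_le max.bounded_iff max.cobounded1)
  show ?thesis
  proof (rule damped_second_order_converges[where a = a and \<theta> = "1 / 2" and \<delta> = \<delta>])
    show "((\<lambda>t. 1 / (c / (1 + t) powr \<alpha>)) has_real_derivative \<delta> t) (at t)" if "a \<le> t" for t
    proof -
      have "((\<lambda>t. (1 + t) powr \<alpha> / c) has_real_derivative \<alpha> * (1 + t) powr (\<alpha> - 1) * 1 / c) (at t)"
        using that \<open>1 \<le> a\<close> c_pos by (auto intro!: derivative_eq_intros)
      then show ?thesis by (simp add: \<delta>_def)
    qed
    show "(\<lambda>t. norm (\<omega> t) / (c / (1 + t) powr \<alpha>)) integrable_on {a..}"
      using \<omega>_int c_pos \<open>1 \<le> a\<close> set_integrable_subset[of lebesgue "{0..}" _ "{a..}"]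
        set_lebesgue_integral_eq_integral(1) nonnegative_absolutely_integrable_1[OF \<omega>_int]
      by auto
    show "AE t in lebesgue. a \<le> t \<longrightarrow> y'' t + (c / (1 + t) powr \<alpha>) *\<^sub>R y' t = \<omega> t"
      using ode by eventually_elim (use \<open>1 \<le> a\<close> in auto)
  qed (use c_pos \<delta>_le W21loc \<open>1 \<le> a\<close> in auto)
qed

end
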